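(* For integers $n\geq 3$, $m\geq 1$ and $p\geq 2$, $$\chi_\rho(FSSD_m(C_n\star P_p)) \leq \begin{cases} 6, & n=3,\\ 7, & n\geq 4,\ n\notin\{5,7,11\},\\ 8, & n\in\{5,7,11\}.\end{cases}$$
   Context: All graphs are finite and simple. For a positive integer $i$, an $i$-packing in a graph is a set of vertices any two distinct members of which are at distance greater than $i$. The packing chromatic number $\chi_\rho(H)$ is the smallest $k$ such that $V(H)$ can be partitioned into sets $V_1,\dots,V_k$ with each $V_i$ an $i$-packing. For a positive integer $m$, $FSSD_m(G)$ is obtained from $G$ by replacing each edge $xy$ by a copy of $K_{2,m}$: the edge $xy$ is deleted and $m$ new vertices are added, each adjacent to exactly $x$ and $y$. The neighborhood corona $G\star H$ of graphs $G$ (with vertices $w_1,\dots,w_{n}$) and $H$ consists of one copy of $G$ and $n$ copies $H_1,\dots,H_n$ of $H$ (each retaining the edges of $H$), where every vertex of $H_i$ is additionally joined to every neighbor of $w_i$ in $G$. $C_n$ is the cycle and $P_p$ the path on $p$ vertices. *)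

theory Defs
  imports Main "HOL-Library.Extended_Nat"
begin

text \<open>A (simple) graph is a vertex set together with a symmetric, irreflexive
adjacency relation (the constructions below only produce such graphs).\<close>
type_synonym 'a graph = "'a set \<times> ('a \<Rightarrow> 'a \<Rightarrow> bool)"

definition verts :: "'a graph \<Rightarrow> 'a set" where "verts G = fst G"
definition adj :: "'a graph \<Rightarrow> 'a \<Rightarrow> 'a \<Rightarrow> bool" where "adj G = snd G"

definition walk_of_len :: "'a graph \<Rightarrow> 'a \<Rightarrow> 'a \<Rightarrow> nat \<Rightarrow> bool" where
  "walk_of_len G u v n \<longleftrightarrow> (\<exists>xs. length xs = Suc n \<and> set xs \<subseteq> verts G \<and>
      hd xs = u \<and> last xs = v \<and> (\<forall>i<n. adj G (xs ! i) (xs ! Suc i)))"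

text \<open>Distance (infinite if there is no path).\<close>
definition gdist :: "'a graph \<Rightarrow> 'a \<Rightarrow> 'a \<Rightarrow> enat" where
  "gdist G u v = (INF n \<in> {n. walk_of_len G u v n}. enat n)"

definition is_packing :: "'a graph \<Rightarrow> nat \<Rightarrow> 'a set \<Rightarrow> bool" where
  "is_packing G i S \<longleftrightarrow> S \<subseteq> verts G \<and>
     (\<forall>u\<in>S. \<forall>v\<in>S. u \<noteq> v \<longrightarrow> gdist G u v > enat i)"

text \<open>A partition of V into V_1..V_k (possibly empty parts) with V_i an i-packing,
  encoded by the colour function c (V_i = c^{-1}(i)).\<close>
definition packing_coloring :: "'a graph \<Rightarrow> nat \<Rightarrow> ('a \<Rightarrow> nat) \<Rightarrow> bool" where
  "packing_coloring G k c \<longleftrightarrow> (\<forall>v\<in>verts G. c v \<in> {1..k}) \<and>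
     (\<forall>i\<in>{1..k}. is_packing G i {v\<in>verts G. c v = i})"

definition packing_chromatic_number :: "'a graph \<Rightarrow> nat" where
  "packing_chromatic_number G = (LEAST k. \<exists>c. packing_coloring G k c)"

definition cycle_graph :: "nat \<Rightarrow> nat graph" where
  "cycle_graph n = ({0..<n}, \<lambda>i j. i < n \<and> j < n \<and> (j = Suc i mod n \<or> i = Suc j mod n))"

definition path_graph :: "nat \<Rightarrow> nat graph" where
  "path_graph p = ({0..<p}, \<lambda>i j. i < p \<and> j < p \<and> (j = Suc i \<or> i = Suc j))"

text \<open>Neighborhood corona: Inl w is the vertex w of G, Inr (i,h) is vertex h of the copy H_i.\<close>
definition nbhd_corona :: "'a graph \<Rightarrow> 'b graph \<Rightarrow> ('a + 'a \<times> 'b) graph" where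
  "nbhd_corona G H =
    (Inl ` verts G \<union> Inr ` (verts G \<times> verts H),
     \<lambda>x y. (\<exists>a b. x = Inl a \<and> y = Inl b \<and> a \<in> verts G \<and> b \<in> verts G \<and> adj G a b)
         \<or> (\<exists>a i h. x = Inl a \<and> y = Inr (i, h) \<and> a \<in> verts G \<and> i \<in> verts G \<and> h \<in> verts H \<and> adj G a i)
         \<or> (\<exists>a i h. y = Inl a \<and> x = Inr (i, h) \<and> a \<in> verts G \<and> i \<in> verts G \<and> h \<in> verts H \<and> adj G a i)
         \<or> (\<exists>i h h'. x = Inr (i, h) \<and> y = Inr (i, h') \<and> i \<in> verts G \<and> h \<in> verts H \<and> h' \<in> verts H
                        \<and> adj H h h'))"

text \<open>FSSD_m: each edge {x,y} is replaced by m new vertices Inr ({x,y}, j), j < m,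
  each adjacent exactly to Inl x and Inl y; the original edges are deleted.\<close>
definition fssd :: "nat \<Rightarrow> 'a graph \<Rightarrow> ('a + 'a set \<times> nat) graph" where
  "fssd m G =
    (Inl ` verts G \<union> {Inr ({x, y}, j) | x y j. x \<in> verts G \<and> y \<in> verts G \<and> adj G x y \<and> j < m},
     \<lambda>u v. \<exists>x y j. x \<in> verts G \<and> y \<in> verts G \<and> adj G x y \<and> j < m \<and>
        ((u = Inl x \<and> v = Inr ({x, y}, j)) \<or> (v = Inl x \<and> u = Inr ({x, y}, j))))"

end

theory Submission
  imports Defs
begin

text \<open>
  Color the subdivision vertices with 1, a vertex h of a path copy with 2 or 3 according to
  the parity of h, and the cycle vertices with colors from 4 on. Subdivision vertices are
  pairwise non-adjacent. Two original vertices of FSSD_m(G) are at even distance, and at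
  distance 2 only if they are adjacent in G; copy vertices of equal parity are not adjacent in
  the corona, so they are more than 3 apart.

  For the cycle vertices, place every vertex on a cycle of length 2n: the cycle vertex a and
  all vertices of the copy H_a at 2a, a subdivision vertex midway between its two ends.
  Adjacent vertices land at most one step apart, so cycle vertices a and b are at distance at
  least twice their cyclic distance, and it suffices to color C_n such that vertices of
  color k are at cyclic distance more than k/2. This uses colors 4..6 for n = 3, 4..8 for
  n in {5, 7, 11}, and 4..7 otherwise, where the coloring is a prefix depending on n mod 4
  followed by blocks 4, 5, 6, 7. It is checked by computation for at most two blocks and
  extends block by block, because removing a block from the periodic part changes no window
  of five consecutive colors.
\<close>

lemma walk_of_lenE:
  assumes "walk_of_len G u v l"
  obtains xs where "length xs = Suc l" "set xs \<subseteq> verts G" "xs ! 0 = u" "xs ! l = v"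
    "\<forall>i<l. adj G (xs ! i) (xs ! Suc i)"
proof -
  obtain xs where xs: "length xs = Suc l" "set xs \<subseteq> verts G" "hd xs = u" "last xs = v"
    "\<forall>i<l. adj G (xs ! i) (xs ! Suc i)"
    using assms unfolding walk_of_len_def by blast
  then have "xs ! 0 = u" "xs ! l = v"
    by (auto simp: hd_conv_nth last_conv_nth simp flip: length_greater_0_conv)
  with xs that show ?thesis by blast
qed

lemma enat_less_gdistI:
  assumes "\<And>l. walk_of_len G u v l \<Longrightarrow> i < l"
  shows "enat i < gdist G u v"
proof -
  have "enat (Suc i) \<le> gdist G u v"
    unfolding gdist_def by (rule INF_greatest) (use assms in \<open>auto simp: Suc_le_eq\<close>)
  then show ?thesis
    by (simp add: Suc_ile_eq)
qed

lemma packing_chromatic_number_le: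
  assumes "packing_coloring G k c"
  shows "packing_chromatic_number G \<le> k"
  unfolding packing_chromatic_number_def using assms by (intro Least_le) blast

section \<open>Distances through maps to a cycle\<close>

definition close_mod :: "int \<Rightarrow> nat \<Rightarrow> int \<Rightarrow> int \<Rightarrow> bool" where
  "close_mod N r x y \<longleftrightarrow> (\<exists>z. \<bar>x - y - N * z\<bar> \<le> int r)"

lemma close_mod_refl: "close_mod N r x x"
  unfolding close_mod_def by (intro exI[of _ 0]) simp

lemma close_mod_sym: "close_mod N r x y \<Longrightarrow> close_mod N r y x"
  unfolding close_mod_def
  by (metis abs_minus_commute minus_diff_eq mult_minus_right diff_minus_eq_add add.commute
      diff_diff_eq2)

lemma close_mod_trans:
  assumes "close_mod N r x y" and "close_mod N s y w"
  shows "close_mod N (r + s) x w"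
proof -
  obtain z z' where "\<bar>x - y - N * z\<bar> \<le> int r" "\<bar>y - w - N * z'\<bar> \<le> int s"
    using assms unfolding close_mod_def by blast
  then have "\<bar>x - w - N * (z + z')\<bar> \<le> int (r + s)"
    by (simp add: algebra_simps abs_le_iff)
  then show ?thesis
    unfolding close_mod_def by blast
qed

definition nonexpanding_mod :: "int \<Rightarrow> 'a graph \<Rightarrow> ('a \<Rightarrow> int) \<Rightarrow> bool" where
  "nonexpanding_mod N G f \<longleftrightarrow>
     (\<forall>x\<in>verts G. \<forall>y\<in>verts G. adj G x y \<longrightarrow> close_mod N 1 (f x) (f y))"

lemma walk_close_mod:
  assumes "nonexpanding_mod N G f" and "walk_of_len G u v l"
  shows "close_mod N l (f u) (f v)"
proof -
  obtain xs where xs: "length xs = Suc l" "set xs \<subseteq> verts G" "xs ! 0 = u" "xs ! l = v"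
    "\<forall>i<l. adj G (xs ! i) (xs ! Suc i)"
    using assms(2) by (rule walk_of_lenE)
  have "close_mod N i (f u) (f (xs ! i))" if "i \<le> l" for i
    using that
  proof (induction i)
    case 0
    show ?case
      using xs(3) by (simp add: close_mod_refl)
  next
    case (Suc i)
    have "xs ! i \<in> verts G" "xs ! Suc i \<in> verts G"
      using nth_mem[of i xs] nth_mem[of "Suc i" xs] xs(1,2) Suc.prems by auto
    then have "close_mod N 1 (f (xs ! i)) (f (xs ! Suc i))"
      using assms(1) xs(5) Suc.prems unfolding nonexpanding_mod_def by simp
    with Suc show ?case
      using close_mod_trans by fastforce
  qed
  from this[of l] show ?thesis
    using xs(4) by simp
qed

lemma verts_cycle_graph [simp]: "verts (cycle_graph n) = {0..<n}"
  by (simp add: cycle_graph_def verts_def)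

lemma close_mod_Suc_mod:
  assumes "a < n"
  shows "close_mod (int n) 1 (int a) (int (Suc a mod n))"
proof (cases "Suc a < n")
  case True
  then show ?thesis
    unfolding close_mod_def by (intro exI[of _ 0]) simp
next
  case False
  with assms have "Suc a = n" by simp
  then show ?thesis
    unfolding close_mod_def by (intro exI[of _ 1]) auto
qed

lemma cycle_graph_nonexpanding: "nonexpanding_mod (int n) (cycle_graph n) int"
  unfolding nonexpanding_mod_def cycle_graph_def verts_def adj_def
  using close_mod_Suc_mod close_mod_sym by auto

lemma nbhd_corona_nonexpanding:
  assumes "nonexpanding_mod N G f"
  shows "nonexpanding_mod N (nbhd_corona G H) (case_sum f (f \<circ> fst))"
  using assms close_mod_sym
  unfolding nonexpanding_mod_def nbhd_corona_def verts_def adj_def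
  by (auto simp: close_mod_refl)

section \<open>Full subdivisions\<close>

lemma verts_fssd:
  "verts (fssd m G) = Inl ` verts G \<union>
     {Inr ({x, y}, j) | x y j. x \<in> verts G \<and> y \<in> verts G \<and> adj G x y \<and> j < m}"
  by (simp add: verts_def fssd_def)

lemma adj_fssd_iff:
  "adj (fssd m G) u v \<longleftrightarrow> (\<exists>x y j. x \<in> verts G \<and> y \<in> verts G \<and> adj G x y \<and> j < m \<and>
     ((u = Inl x \<and> v = Inr ({x, y}, j)) \<or> (v = Inl x \<and> u = Inr ({x, y}, j))))"
  by (simp add: adj_def fssd_def)

lemma adj_fssd_isl: "adj (fssd m G) u v \<Longrightarrow> isl u \<longleftrightarrow> \<not> isl v"
  unfolding adj_fssd_iff by auto

lemma adj_fssd_two_steps: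
  assumes "adj (fssd m G) (Inl x) s" and "adj (fssd m G) s (Inl y)" and "x \<noteq> y"
  shows "adj G x y"
proof -
  obtain y' j where s: "s = Inr ({x, y'}, j)" "adj G x y'"
    using assms(1) unfolding adj_fssd_iff by auto
  obtain x' j' where "s = Inr ({y, x'}, j')"
    using assms(2) unfolding adj_fssd_iff by auto
  with s assms(3) have "y' = y"
    by (auto simp: doubleton_eq_iff)
  with s show ?thesis
    by simp
qed

lemma gdist_fssd_Inr:
  assumes "e \<noteq> e'"
  shows "enat 1 < gdist (fssd m G) (Inr e) (Inr e')"
proof (rule enat_less_gdistI)
  fix l
  assume walk: "walk_of_len (fssd m G) (Inr e) (Inr e') l"
  obtain xs where xs: "length xs = Suc l" "set xs \<subseteq> verts (fssd m G)" "xs ! 0 = Inr e"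
    "xs ! l = Inr e'" "\<forall>i<l. adj (fssd m G) (xs ! i) (xs ! Suc i)"
    using walk by (rule walk_of_lenE)
  show "1 < l"
  proof (rule ccontr)
    assume "\<not> 1 < l"
    then consider "l = 0" | "l = 1" by linarith
    then show False
    proof cases
      case 1
      with xs(3,4) assms show False by simp
    next
      case 2
      with xs(3,4) adj_fssd_isl[OF xs(5)[rule_format, of 0]] show False by simp
    qed
  qed
qed

lemma gdist_fssd_Inl:
  assumes "x \<noteq> y" and "\<not> adj G x y"
  shows "enat 3 < gdist (fssd m G) (Inl x) (Inl y)"
proof (rule enat_less_gdistI)
  fix l
  assume walk: "walk_of_len (fssd m G) (Inl x) (Inl y) l"
  obtain xs where xs: "length xs = Suc l" "set xs \<subseteq> verts (fssd m G)" "xs ! 0 = Inl x"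
    "xs ! l = Inl y" "\<forall>i<l. adj (fssd m G) (xs ! i) (xs ! Suc i)"
    using walk by (rule walk_of_lenE)
  show "3 < l"
  proof (rule ccontr)
    assume "\<not> 3 < l"
    then consider "l = 0" | "l = 1" | "l = 2" | "l = 3" by linarith
    then show False
    proof cases
      case 1
      with xs(3,4) assms show False by simp
    next
      case 2
      with xs(3,4) adj_fssd_isl[OF xs(5)[rule_format, of 0]] show False by simp
    next
      case 3
      have "adj (fssd m G) (Inl x) (xs ! 1)"
        using xs(3) xs(5)[rule_format, of 0] 3 by simp
      moreover have "adj (fssd m G) (xs ! 1) (Inl y)"
        using xs(4) xs(5)[rule_format, of 1] 3 by (simp add: numeral_2_eq_2)
      ultimately have "adj G x y"
        using adj_fssd_two_steps assms(1) by metis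
      with assms(2) show False ..
    next
      case 4
      have "\<not> isl (xs ! 1)"
        using xs(3) adj_fssd_isl[OF xs(5)[rule_format, of 0]] 4 by simp
      then have "\<not> isl (xs ! 3)"
        using adj_fssd_isl[OF xs(5)[rule_format, of 1]] adj_fssd_isl[OF xs(5)[rule_format, of 2]] 4
        by (simp add: numeral_2_eq_2 numeral_3_eq_3)
      with xs(4) 4 show False by simp
    qed
  qed
qed

text \<open>A subdivision vertex is placed at a point close to both ends of its edge. Such a point
  exists for every edge, the only case in which the choice matters.\<close>
fun fssd_potential :: "('a \<Rightarrow> int) \<Rightarrow> int \<Rightarrow> 'a + 'a set \<times> nat \<Rightarrow> int" where
  "fssd_potential f N (Inl x) = 2 * f x"
| "fssd_potential f N (Inr (e, j)) = (SOME q. \<forall>x\<in>e. close_mod (2 * N) 1 (2 * f x) q)"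

lemma close_mod_midpoint:
  assumes "close_mod N 1 a b"
  shows "\<exists>q. close_mod (2 * N) 1 (2 * a) q \<and> close_mod (2 * N) 1 (2 * b) q"
proof -
  obtain z where z: "\<bar>a - b - N * z\<bar> \<le> 1"
    using assms unfolding close_mod_def by auto
  define t where "t = a - b - N * z"
  have "close_mod (2 * N) 1 (2 * a) (2 * a - t)"
    unfolding close_mod_def using z by (intro exI[of _ 0]) (simp add: t_def)
  moreover have "close_mod (2 * N) 1 (2 * b) (2 * a - t)"
    unfolding close_mod_def using z by (intro exI[of _ "-z"]) (simp add: t_def algebra_simps)
  ultimately show ?thesis
    by blast
qed

lemma fssd_nonexpanding:
  assumes "nonexpanding_mod N G f"
  shows "nonexpanding_mod (2 * N) (fssd m G) (fssd_potential f N)"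
  unfolding nonexpanding_mod_def
proof (intro ballI impI)
  fix u v
  assume "adj (fssd m G) u v"
  then obtain x y j where xy: "x \<in> verts G" "y \<in> verts G" "adj G x y"
    and uv: "(u = Inl x \<and> v = Inr ({x, y}, j)) \<or> (v = Inl x \<and> u = Inr ({x, y}, j))"
    unfolding adj_fssd_iff by blast
  have "\<exists>q. \<forall>w\<in>{x, y}. close_mod (2 * N) 1 (2 * f w) q"
    using close_mod_midpoint assms xy unfolding nonexpanding_mod_def by auto
  then have "\<forall>w\<in>{x, y}. close_mod (2 * N) 1 (2 * f w) (fssd_potential f N (Inr ({x, y}, j)))"
    unfolding fssd_potential.simps by (rule someI_ex)
  then have "close_mod (2 * N) 1 (2 * f x) (fssd_potential f N (Inr ({x, y}, j)))"
    by simp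
  with uv show "close_mod (2 * N) 1 (fssd_potential f N u) (fssd_potential f N v)"
    by (auto intro: close_mod_sym)
qed

lemma walk_fssd_corona_cycle_close_mod:
  assumes "walk_of_len (fssd m (nbhd_corona (cycle_graph n) H)) (Inl (Inl a)) (Inl (Inl b)) l"
  shows "close_mod (2 * int n) l (2 * int a) (2 * int b)"
  using walk_close_mod[OF fssd_nonexpanding[OF nbhd_corona_nonexpanding[OF
        cycle_graph_nonexpanding]] assms]
  by simp

section \<open>Spaced colorings of a cycle\<close>

text \<open>Vertices of equal color k at cyclic distance d need k < 2 d; for colors below 10 only
  d \<le> 4 has to be checked.\<close>
definition spaced_on_cycle :: "nat \<Rightarrow> (nat \<Rightarrow> nat) \<Rightarrow> bool" where
  "spaced_on_cycle n f \<longleftrightarrow> (\<forall>a<n. \<forall>d\<in>{1..4}.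
     (a + d) mod n \<noteq> a \<longrightarrow> f ((a + d) mod n) = f a \<longrightarrow> f a < 2 * d)"

lemma spaced_on_cycle_iff_list_all:
  "spaced_on_cycle n f \<longleftrightarrow> list_all (\<lambda>a. list_all (\<lambda>d.
     (a + d) mod n \<noteq> a \<longrightarrow> f ((a + d) mod n) = f a \<longrightarrow> f a < 2 * d) [1..<5]) [0..<n]"
  unfolding spaced_on_cycle_def list_all_iff by auto

lemma mod_eq_of_int_eq:
  assumes "int x = int b + int n * z" and "b < n"
  shows "x mod n = b"
proof -
  have "int (x mod n) = (int b + int n * z) mod int n"
    by (simp flip: assms(1) add: zmod_int)
  also have "\<dots> = int b"
    using assms(2) by simp
  finally show ?thesis
    by simp
qed

lemma spaced_on_cycleD:
  assumes "spaced_on_cycle n f" and "a < n" "b < n" "a \<noteq> b" "f a = f b"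
    and "d \<in> {1..4}" and "int a + int d = int b + int n * z"
  shows "f a < 2 * d"
proof -
  have "(a + d) mod n = b"
    using assms(3,7) by (intro mod_eq_of_int_eq[of _ _ _ z]) simp_all
  with assms(1,2,4,5,6) show ?thesis
    unfolding spaced_on_cycle_def by auto
qed

lemma spaced_on_cycle_close_mod:
  assumes spaced: "spaced_on_cycle n f" and small: "\<And>a. a < n \<Longrightarrow> f a < 10"
    and ab: "a < n" "b < n" "a \<noteq> b" "f a = f b"
    and close: "close_mod (2 * int n) l (2 * int a) (2 * int b)"
  shows "f a < l"
proof -
  obtain z where z: "\<bar>2 * int a - 2 * int b - 2 * int n * z\<bar> \<le> int l"
    using close unfolding close_mod_def by blast
  define \<delta> where "\<delta> = int a - int b - int n * z"
  have "int (f a) < 2 * \<bar>\<delta>\<bar>"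
  proof -
    consider "5 \<le> \<bar>\<delta>\<bar>" | "\<delta> = 0" | "1 \<le> \<delta> \<and> \<delta> \<le> 4" | "1 \<le> - \<delta> \<and> - \<delta> \<le> 4"
      by linarith
    then show ?thesis
    proof cases
      case 1
      then show ?thesis using small ab(1) by force
    next
      case 2
      then have "int a = int b + int n * z"
        by (simp add: \<delta>_def)
      then have "a mod n = b"
        using ab(2) by (rule mod_eq_of_int_eq)
      with ab(1,3) show ?thesis
        by simp
    next
      case 3
      have "nat \<delta> \<in> {1..4}" "int b + int (nat \<delta>) = int a + int n * (- z)"
        using 3 by (auto simp: \<delta>_def)
      then have "f b < 2 * nat \<delta>"
        using spaced_on_cycleD[OF spaced ab(2,1) ab(3)[symmetric] ab(4)[symmetric]] by blast
      with 3 ab(4) show ?thesis by simp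
    next
      case 4
      have "nat (- \<delta>) \<in> {1..4}" "int a + int (nat (- \<delta>)) = int b + int n * z"
        using 4 by (auto simp: \<delta>_def)
      then have "f a < 2 * nat (- \<delta>)"
        using spaced_on_cycleD[OF spaced ab] by blast
      with 4 show ?thesis by simp
    qed
  qed
  moreover have "\<bar>2 * \<delta>\<bar> \<le> int l"
    using z by (simp add: \<delta>_def right_diff_distrib)
  ultimately show ?thesis
    by linarith
qed

definition block_coloring :: "nat list \<Rightarrow> nat \<Rightarrow> nat" where
  "block_coloring T i = (if i < length T then T ! i else 4 + (i - length T) mod 4)"

lemma block_coloring_add_4:
  assumes "length T \<le> i"
  shows "block_coloring T (i + 4) = block_coloring T i"
proof -
  obtain j where "i = length T + j"
    using assms le_Suc_ex by blast
  then show ?thesis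
    unfolding block_coloring_def by simp
qed

lemma spaced_on_cycle_block_coloring_Suc:
  assumes spaced: "spaced_on_cycle (length T + 4 * k) (block_coloring T)" and "2 \<le> k"
  shows "spaced_on_cycle (length T + 4 * Suc k) (block_coloring T)"
  unfolding spaced_on_cycle_def
proof (intro allI ballI impI)
  define n where "n = length T + 4 * k"
  let ?c = "block_coloring T"
  fix a d
  assume a: "a < length T + 4 * Suc k" and d: "d \<in> {1..4}"
    and "(a + d) mod (length T + 4 * Suc k) \<noteq> a"
    and eq: "?c ((a + d) mod (length T + 4 * Suc k)) = ?c a"
  have n': "length T + 4 * Suc k = n + 4"
    by (simp add: n_def)
  show "?c a < 2 * d"
  proof (cases "a + d < n")
    case True
    with n' have "(a + d) mod (length T + 4 * Suc k) = (a + d) mod n"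
      by simp
    with True d eq spaced show ?thesis
      unfolding spaced_on_cycle_def n_def by auto
  next
    case False
    \<comment> \<open>then a lies in the last block, and shifting it back by one block changes nothing\<close>
    have bounds: "n \<le> a + d" "a < n + 4" "1 \<le> d" "d \<le> 4" "length T + 8 \<le> n"
      using False a d \<open>2 \<le> k\<close> by (auto simp: n_def)
    define a' where "a' = a - 4"
    have a': "a = a' + 4" "length T \<le> a'" "a' < n"
      using bounds by (auto simp: a'_def)
    have shift: "?c ((a + d) mod (n + 4)) = ?c ((a' + d) mod n) \<and> (a' + d) mod n \<noteq> a'"
    proof (cases "a + d < n + 4")
      case True
      then have "(a + d) mod (n + 4) = (a' + d) + 4" "(a' + d) mod n = a' + d"
        using a'(1) by simp_all
      then show ?thesis
        using a'(2) bounds(3) by (simp add: block_coloring_add_4)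
    next
      case False
      then have "(a + d) mod (n + 4) = a + d - (n + 4)" "(a' + d) mod n = a' + d - n"
        using a' bounds by (simp_all add: le_mod_geq)
      then show ?thesis
        using a' bounds False by simp
    qed
    have "?c a = ?c a'"
      using a' block_coloring_add_4 by simp
    moreover have "spaced_on_cycle n ?c"
      using spaced by (simp add: n_def)
    ultimately show ?thesis
      using a'(3) d eq n' shift unfolding spaced_on_cycle_def by metis
  qed
qed

lemma spaced_on_cycle_block_coloring:
  assumes "spaced_on_cycle (length T + 4) (block_coloring T)"
    and "spaced_on_cycle (length T + 8) (block_coloring T)" and "1 \<le> k"
  shows "spaced_on_cycle (length T + 4 * k) (block_coloring T)"
proof (cases "k = 1")
  case True
  with assms(1) show ?thesis by simp
next
  case False
  with assms(3) have "2 \<le> k" by simp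
  then show ?thesis
  proof (induction k rule: dec_induct)
    case base
    from assms(2) show ?case by simp
  next
    case (step k)
    then show ?case
      by (intro spaced_on_cycle_block_coloring_Suc) simp_all
  qed
qed

definition color_prefix :: "nat \<Rightarrow> nat list" where
  "color_prefix n =
     (if n = 3 then [4, 5, 6]
      else if n = 5 then [4, 5, 6, 7, 8]
      else if n = 7 then [4, 5, 6, 4, 5, 7, 8]
      else if n = 11 then [4, 5, 6, 4, 5, 7, 4, 5, 6, 7, 8]
      else if n mod 4 = 0 then []
      else if n mod 4 = 1 then [4, 5, 6, 4, 7, 5, 4, 6, 7]
      else if n mod 4 = 2 then [4, 5, 6, 4, 5, 7]
      else [4, 5, 6, 4, 5, 7, 4, 5, 6, 4, 7, 5, 4, 6, 7])"

definition cycle_coloring :: "nat \<Rightarrow> nat \<Rightarrow> nat" where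
  "cycle_coloring n = block_coloring (color_prefix n)"

definition palette_size :: "nat \<Rightarrow> nat" where
  "palette_size n = (if n = 3 then 6 else if n \<in> {5, 7, 11} then 8 else 7)"

lemma color_prefix_decomposition:
  assumes "3 \<le> n"
  obtains k where "n = length (color_prefix n) + 4 * k" and "k = 0 \<or> n \<notin> {3, 5, 7, 11}"
proof -
  have "\<exists>k. n = length (color_prefix n) + 4 * k \<and> (k = 0 \<or> n \<notin> {3, 5, 7, 11})"
    using assms unfolding color_prefix_def by simp presburger
  with that show ?thesis
    by blast
qed

lemma spaced_on_cycle_color_prefix:
  assumes "color_prefix n \<noteq> []"
  shows "spaced_on_cycle (length (color_prefix n)) (block_coloring (color_prefix n))"
proof -
  have "color_prefix n \<in> set [[4, 5, 6], [4, 5, 6, 7, 8], [4, 5, 6, 4, 5, 7, 8],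
      [4, 5, 6, 4, 5, 7, 4, 5, 6, 7, 8], [4, 5, 6, 4, 7, 5, 4, 6, 7], [4, 5, 6, 4, 5, 7],
      [4, 5, 6, 4, 5, 7, 4, 5, 6, 4, 7, 5, 4, 6, 7]]"
    using assms unfolding color_prefix_def by (simp split: if_splits)
  moreover have "list_all (\<lambda>T. spaced_on_cycle (length T) (block_coloring T))
      [[4, 5, 6], [4, 5, 6, 7, 8], [4, 5, 6, 4, 5, 7, 8],
       [4, 5, 6, 4, 5, 7, 4, 5, 6, 7, 8], [4, 5, 6, 4, 7, 5, 4, 6, 7], [4, 5, 6, 4, 5, 7],
       [4, 5, 6, 4, 5, 7, 4, 5, 6, 4, 7, 5, 4, 6, 7]]"
    unfolding spaced_on_cycle_iff_list_all by code_simp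
  ultimately show ?thesis
    unfolding list_all_iff by blast
qed

lemma spaced_on_cycle_color_prefix_blocks:
  assumes "n \<notin> {3, 5, 7, 11}" and "k \<in> {1, 2}"
  shows "spaced_on_cycle (length (color_prefix n) + 4 * k) (block_coloring (color_prefix n))"
proof -
  have "color_prefix n \<in> set [[], [4, 5, 6, 4, 7, 5, 4, 6, 7], [4, 5, 6, 4, 5, 7],
      [4, 5, 6, 4, 5, 7, 4, 5, 6, 4, 7, 5, 4, 6, 7]]"
    using assms(1) unfolding color_prefix_def by simp
  moreover have "list_all (\<lambda>T. list_all (\<lambda>k.
        spaced_on_cycle (length T + 4 * k) (block_coloring T)) [1, 2])
      [[], [4, 5, 6, 4, 7, 5, 4, 6, 7], [4, 5, 6, 4, 5, 7],
       [4, 5, 6, 4, 5, 7, 4, 5, 6, 4, 7, 5, 4, 6, 7]]"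
    unfolding spaced_on_cycle_iff_list_all by code_simp
  ultimately show ?thesis
    using assms(2) unfolding list_all_iff by auto
qed

lemma spaced_on_cycle_cycle_coloring:
  assumes "3 \<le> n"
  shows "spaced_on_cycle n (cycle_coloring n)"
proof -
  obtain k where n: "n = length (color_prefix n) + 4 * k" and k: "k = 0 \<or> n \<notin> {3, 5, 7, 11}"
    using color_prefix_decomposition[OF assms] .
  show ?thesis
  proof (cases "k = 0")
    case True
    with n assms have "color_prefix n \<noteq> []"
      by auto
    then have "spaced_on_cycle (length (color_prefix n) + 4 * k) (cycle_coloring n)"
      unfolding cycle_coloring_def using spaced_on_cycle_color_prefix True by simp
    then show ?thesis
      by (simp only: n[symmetric])
  next
    case False
    with k have "n \<notin> {3, 5, 7, 11}"
      by simp
    then have "spaced_on_cycle (length (color_prefix n) + 4 * k) (cycle_coloring n)"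
      unfolding cycle_coloring_def using False
      spaced_on_cycle_color_prefix_blocks[of n 1] spaced_on_cycle_color_prefix_blocks[of n 2]
      by (intro spaced_on_cycle_block_coloring) simp_all
    then show ?thesis
      by (simp only: n[symmetric])
  qed
qed

lemma cycle_coloring_range:
  assumes "3 \<le> n" and "a < n"
  shows "4 \<le> cycle_coloring n a \<and> cycle_coloring n a \<le> palette_size n"
proof -
  have "set (color_prefix n) \<subseteq> {4..palette_size n}"
    unfolding color_prefix_def palette_size_def by auto
  moreover have "a < length (color_prefix n) \<or> 7 \<le> palette_size n"
    using assms unfolding color_prefix_def palette_size_def by auto
  ultimately show ?thesis
    unfolding cycle_coloring_def block_coloring_def
    by (auto simp: subset_iff)
qed

section \<open>A packing coloring of FSSD_m(C_n \<star> P_p)\<close>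

lemma verts_fssd_nbhd_corona_cases:
  assumes "v \<in> verts (fssd m (nbhd_corona G H))"
  obtains (subdivision) e where "v = Inr e"
    | (copy) i h where "v = Inl (Inr (i, h))"
    | (base) a where "a \<in> verts G" "v = Inl (Inl a)"
  using assms unfolding verts_fssd by (auto simp: nbhd_corona_def verts_def)

lemma not_adj_nbhd_corona_path_same_parity:
  assumes "h mod 2 = h' mod 2"
  shows "\<not> adj (nbhd_corona G (path_graph p)) (Inr (i, h)) (Inr (i', h'))"
  using assms unfolding nbhd_corona_def path_graph_def adj_def by (auto; presburger)

definition fssd_corona_coloring ::
    "nat \<Rightarrow> (nat + nat \<times> nat) + (nat + nat \<times> nat) set \<times> nat \<Rightarrow> nat" where
  "fssd_corona_coloring n v =
     (case v of
       Inr _ \<Rightarrow> 1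
     | Inl (Inr (i, h)) \<Rightarrow> 2 + h mod 2
     | Inl (Inl a) \<Rightarrow> cycle_coloring n a)"

lemma fssd_corona_coloring_range:
  assumes "3 \<le> n" and "v \<in> verts (fssd m (nbhd_corona (cycle_graph n) (path_graph p)))"
  shows "fssd_corona_coloring n v \<in> {1..palette_size n}"
  using assms(2)
proof (cases rule: verts_fssd_nbhd_corona_cases)
  case (base a)
  then have "a < n"
    by simp
  with base(2) cycle_coloring_range[OF assms(1) this] show ?thesis
    by (simp add: fssd_corona_coloring_def)
qed (auto simp: fssd_corona_coloring_def palette_size_def)

lemma fssd_corona_coloring_eq_cases:
  fixes n :: nat
  defines "c \<equiv> fssd_corona_coloring n"
  assumes "3 \<le> n"
    and u: "u \<in> verts (fssd m (nbhd_corona (cycle_graph n) (path_graph p)))"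
    and v: "v \<in> verts (fssd m (nbhd_corona (cycle_graph n) (path_graph p)))"
    and same: "c u = c v"
  obtains (subdivision) e e' where "u = Inr e" "v = Inr e'"
    | (copy) i h i' h' where "u = Inl (Inr (i, h))" "v = Inl (Inr (i', h'))" "h mod 2 = h' mod 2"
    | (base) a b where "a < n" "b < n" "u = Inl (Inl a)" "v = Inl (Inl b)"
        "cycle_coloring n a = cycle_coloring n b"
proof -
  have cyc: "4 \<le> cycle_coloring n a" if "a < n" for a
    using cycle_coloring_range[OF assms(2) that] by simp
  have kind_v: "c v = 1 \<Longrightarrow> \<exists>e'. v = Inr e'"
    "c v \<noteq> 1 \<Longrightarrow> c v < 4 \<Longrightarrow> \<exists>i' h'. v = Inl (Inr (i', h')) \<and> c v = 2 + h' mod 2"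
    "4 \<le> c v \<Longrightarrow> \<exists>b<n. v = Inl (Inl b)"
    using v cyc by (cases rule: verts_fssd_nbhd_corona_cases; force simp: c_def fssd_corona_coloring_def)+
  from u show thesis
  proof (cases rule: verts_fssd_nbhd_corona_cases)
    case (subdivision e)
    then have "c v = 1"
      using same by (simp add: c_def fssd_corona_coloring_def)
    with kind_v(1) obtain e' where "v = Inr e'"
      by blast
    with subdivision show thesis
      by (rule that(1))
  next
    case (copy i h)
    then have cu: "c u = 2 + h mod 2"
      by (simp add: c_def fssd_corona_coloring_def)
    with same kind_v(2) obtain i' h' where v': "v = Inl (Inr (i', h'))" "c v = 2 + h' mod 2"
      by fastforce
    with cu same have "h mod 2 = h' mod 2"
      by simp
    with copy v'(1) show thesis
      by (rule that(2))
  next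
    case (base a)
    then have a: "a < n" and cu: "c u = cycle_coloring n a"
      by (simp_all add: c_def fssd_corona_coloring_def)
    with same kind_v(3) cyc[OF a] obtain b where "b < n" "v = Inl (Inl b)"
      by auto
    with base a cu same show thesis
      using that(3)[of a b] by (simp add: c_def fssd_corona_coloring_def)
  qed
qed

lemma fssd_corona_coloring_separates:
  fixes n :: nat
  defines "c \<equiv> fssd_corona_coloring n"
  assumes "3 \<le> n"
    and u: "u \<in> verts (fssd m (nbhd_corona (cycle_graph n) (path_graph p)))"
    and v: "v \<in> verts (fssd m (nbhd_corona (cycle_graph n) (path_graph p)))"
    and "u \<noteq> v" and same: "c u = c v"
  shows "enat (c u) < gdist (fssd m (nbhd_corona (cycle_graph n) (path_graph p))) u v"
  using assms(2) u v same[unfolded c_def]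
proof (cases rule: fssd_corona_coloring_eq_cases)
  case (subdivision e e')
  with \<open>u \<noteq> v\<close> show ?thesis
    using gdist_fssd_Inr by (simp add: c_def fssd_corona_coloring_def)
next
  case (copy i h i' h')
  then have "enat 3 < gdist (fssd m (nbhd_corona (cycle_graph n) (path_graph p))) u v"
    using \<open>u \<noteq> v\<close> by (auto intro!: gdist_fssd_Inl not_adj_nbhd_corona_path_same_parity)
  moreover have "c u \<le> 3"
    using copy by (simp add: c_def fssd_corona_coloring_def)
  ultimately show ?thesis
    by (meson enat_ord_simps(1) le_less_trans)
next
  case (base a b)
  have small: "cycle_coloring n a < 10" if "a < n" for a
    using cycle_coloring_range[OF assms(2) that] by (auto simp: palette_size_def split: if_splits)
  show ?thesis
  proof (rule enat_less_gdistI)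
    fix l
    assume "walk_of_len (fssd m (nbhd_corona (cycle_graph n) (path_graph p))) u v l"
    then have "close_mod (2 * int n) l (2 * int a) (2 * int b)"
      using base walk_fssd_corona_cycle_close_mod by simp
    then show "c u < l"
      using spaced_on_cycle_close_mod[OF spaced_on_cycle_cycle_coloring[OF assms(2)] small] base
        \<open>u \<noteq> v\<close> by (simp add: c_def fssd_corona_coloring_def)
  qed
qed

lemma fssd_corona_packing_coloring:
  assumes "3 \<le> n"
  shows "packing_coloring (fssd m (nbhd_corona (cycle_graph n) (path_graph p)))
    (palette_size n) (fssd_corona_coloring n)"
  unfolding packing_coloring_def is_packing_def
proof (intro conjI ballI impI)
  fix v
  assume "v \<in> verts (fssd m (nbhd_corona (cycle_graph n) (path_graph p)))"
  then show "fssd_corona_coloring n v \<in> {1..palette_size n}"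
    by (rule fssd_corona_coloring_range[OF assms])
next
  fix i u v
  assume "u \<in> {v \<in> verts (fssd m (nbhd_corona (cycle_graph n) (path_graph p))).
      fssd_corona_coloring n v = i}"
    and "v \<in> {v \<in> verts (fssd m (nbhd_corona (cycle_graph n) (path_graph p))).
      fssd_corona_coloring n v = i}"
    and "u \<noteq> v"
  then show "enat i < gdist (fssd m (nbhd_corona (cycle_graph n) (path_graph p))) u v"
    using fssd_corona_coloring_separates[OF assms, of u m p v] by auto
qed auto

theorem theorem2:
  fixes n m p :: nat
  assumes "n \<ge> 3" and "m \<ge> 1" and "p \<ge> 2"
  shows "packing_chromatic_number (fssd m (nbhd_corona (cycle_graph n) (path_graph p)))
           \<le> (if n = 3 then 6 else if n \<in> {5, 7, 11} then 8 else 7)"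
  \<comment> \<open>the bound holds for all m and p\<close>
  using packing_chromatic_number_le[OF fssd_corona_packing_coloring[OF assms(1)]]
  by (simp add: palette_size_def)

end
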